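(* Let $(S,* )$ be a finite cycle set of size $n$ and Dehornoy class $d>1$, and let $d=p_1^{a_1}\cdots p_r^{a_r}$ be the prime factorization of $d$ (the $p_i$ pairwise distinct, $a_i\ge 1$). Then there exist cycle set structures $*_1,\dots,*_r$ on the same set $S$ such that the class $d_i$ of $(S,*_i)$ is a power of $p_i$ for each $i$, and the germ $\overline G$ of $(S,* )$ is the product set $$\overline G=\iota_{d_1}^{d}(\overline G_1)\,\iota_{d_2}^{d}(\overline G_2)\cdots\iota_{d_r}^{d}(\overline G_r),$$ where $\overline G_i$ is the germ of $(S,*_i)$. That is, every cycle set is obtained as a Zappa–Szép product of cycle sets whose classes are prime powers.
   Context: A cycle set is a set $S$ with a binary operation $*$ such that for every $s\in S$ the map $t\mapsto s*t$ is a bijection of $S$, and $(s*t)*(s*u)=(t*s)*(t*u)$ for all $s,t,u\in S$. For a finite cycle set $S=\{s_1,\dots,s_n\}$, let $\psi(s)\in\mathfrak S_n$ be the permutation with $s_i*s_j=s_{\psi(s_i)(j)}$, and let $T(s)=s*s$. For $k\ge 0$ put $\psi_k(s)=\psi(T^{k-1}(s))\circ\cdots\circ\psi(T(s))\circ\psi(s)$ ($\psi_0(s)=\mathrm{id}$). The (Dehornoy) class of $S$ is the smallest integer $d\ge 1$ with $\psi_d(s)=\mathrm{id}$ for all $s\in S$ (it exists). For $\sigma\in\mathfrak S_n$, $P_\sigma$ is the $n\times n$ matrix with entry $1$ at position $(i,\sigma(i))$ and $0$ elsewhere. Let $\zeta_m=e^{2i\pi/m}$. The germ of a cycle set of class $d$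 on $S$ is the subgroup of $GL_n(\mathbb C)$ generated by the matrices $\bar s_i=\mathrm{diag}(1,\dots,1,\zeta_d,1,\dots,1)P_{\psi(s_i)}$ ($\zeta_d$ in the $i$-th diagonal position), $1\le i\le n$; it is a group of monomial matrices whose nonzero entries are $d$-th roots of unity. For $m\mid d$, $\iota_m^{d}$ denotes the embedding of the group of $n\times n$ monomial matrices with nonzero entries in the $m$-th roots of unity into the analogous group for $d$-th roots of unity, obtained by replacing each entry $\zeta_m^{j}$ by $\zeta_d^{jd/m}$. For subsets $A,B$ of a group, $AB=\{ab: a\in A,b\in B\}$. *)

theory Defs
  imports Complex_Main "HOL-Computational_Algebra.Primes" "Jordan_Normal_Form.Matrix"
begin

text \<open>A finite set S of size n is identified with the index set {0..<n};
  the operation * is a function op :: nat => nat => nat, relevant on {0..<n}.\<close>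

definition cycle_set :: "nat \<Rightarrow> (nat \<Rightarrow> nat \<Rightarrow> nat) \<Rightarrow> bool" where
  "cycle_set n op \<longleftrightarrow>
     (\<forall>s<n. bij_betw (op s) {..<n} {..<n}) \<and>
     (\<forall>s<n. \<forall>t<n. \<forall>u<n. op (op s t) (op s u) = op (op t s) (op t u))"

definition cs_psi :: "(nat \<Rightarrow> nat \<Rightarrow> nat) \<Rightarrow> nat \<Rightarrow> nat \<Rightarrow> nat" where
  "cs_psi op s = (\<lambda>j. op s j)"

definition cs_T :: "(nat \<Rightarrow> nat \<Rightarrow> nat) \<Rightarrow> nat \<Rightarrow> nat" where
  "cs_T op s = op s s"

fun cs_psik :: "(nat \<Rightarrow> nat \<Rightarrow> nat) \<Rightarrow> nat \<Rightarrow> nat \<Rightarrow> nat \<Rightarrow> nat" where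
  "cs_psik op 0 s = id"
| "cs_psik op (Suc k) s = cs_psik op k (cs_T op s) \<circ> cs_psi op s"

definition cs_class :: "nat \<Rightarrow> (nat \<Rightarrow> nat \<Rightarrow> nat) \<Rightarrow> nat" where
  "cs_class n op = (LEAST d. d \<ge> 1 \<and> (\<forall>s<n. \<forall>j<n. cs_psik op d s j = j))"

definition zeta :: "nat \<Rightarrow> complex" where
  "zeta m = cis (2 * pi / real m)"

definition perm_mat :: "nat \<Rightarrow> (nat \<Rightarrow> nat) \<Rightarrow> complex mat" where
  "perm_mat n \<sigma> = mat n n (\<lambda>(i,j). if j = \<sigma> i then 1 else 0)"

definition diag_at :: "nat \<Rightarrow> nat \<Rightarrow> complex \<Rightarrow> complex mat" where
  "diag_at n s z = mat n n (\<lambda>(i,j). if i = j then (if i = s then z else 1) else 0)"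

definition germ_gen :: "nat \<Rightarrow> (nat \<Rightarrow> nat \<Rightarrow> nat) \<Rightarrow> nat \<Rightarrow> complex mat" where
  "germ_gen n op s = diag_at n s (zeta (cs_class n op)) * perm_mat n (cs_psi op s)"

inductive_set gen_subgroup :: "nat \<Rightarrow> complex mat set \<Rightarrow> complex mat set"
  for n :: nat and X :: "complex mat set" where
  one: "1\<^sub>m n \<in> gen_subgroup n X"
| gen: "A \<in> X \<Longrightarrow> A \<in> gen_subgroup n X"
| mult: "A \<in> gen_subgroup n X \<Longrightarrow> B \<in> gen_subgroup n X \<Longrightarrow> A * B \<in> gen_subgroup n X"
| inv: "A \<in> gen_subgroup n X \<Longrightarrow> B \<in> carrier_mat n n \<Longrightarrow> B * A = 1\<^sub>m n \<Longrightarrow> A * B = 1\<^sub>m n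
        \<Longrightarrow> B \<in> gen_subgroup n X"

definition germ :: "nat \<Rightarrow> (nat \<Rightarrow> nat \<Rightarrow> nat) \<Rightarrow> complex mat set" where
  "germ n op = gen_subgroup n (germ_gen n op ` {..<n})"

definition iota_entry :: "nat \<Rightarrow> nat \<Rightarrow> complex \<Rightarrow> complex" where
  "iota_entry m d z = (if z = 0 then 0
     else zeta d ^ ((SOME j. j < m \<and> z = zeta m ^ j) * (d div m)))"

definition iota :: "nat \<Rightarrow> nat \<Rightarrow> complex mat \<Rightarrow> complex mat" where
  "iota m d A = map_mat (iota_entry m d) A"

definition set_mult :: "complex mat set \<Rightarrow> complex mat set \<Rightarrow> complex mat set" where
  "set_mult A B = {a * b | a b. a \<in> A \<and> b \<in> B}"

definition set_prod_list :: "nat \<Rightarrow> complex mat set list \<Rightarrow> complex mat set" where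
  "set_prod_list n As = foldr set_mult As {1\<^sub>m n}"

end

theory Submission
  imports Defs "HOL-Combinatorics.Cycles"
begin

text \<open>A word over \<open>S\<close> is evaluated to a monomial: the letter \<open>s\<close> gives the exponent vector
  \<open>e\<^sub>s\<close> together with the permutation \<open>\<psi>(s)\<close>, and the germ is the set of the resulting monomial
  matrices with exponents read modulo the class \<open>d\<close>. The cycle set law implies that the exponent
  vector of a word determines its permutation, even modulo \<open>d\<close>. For \<open>m\<close> dividing \<open>d\<close> the maps
  \<open>\<psi>\<^sub>m\<close> form a cycle set of class \<open>d / m\<close>, and \<open>\<iota>\<close> embeds its germ as the set \<open>G\<^sub>m\<close> of germ
  elements whose exponents are all divisible by \<open>m\<close>. By Bezout, \<open>G\<^sub>a G\<^sub>b = G\<^sub>g\<close> for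
  \<open>g = gcd a b\<close>, and \<open>G\<^sub>d\<close> is trivial. Choosing \<open>m\<^sub>i = d / p\<^sub>i ^ a\<^sub>i\<close>, whose gcd is \<open>1\<close>, the
  product \<open>G\<^sub>m\<^sub>1 \<dots> G\<^sub>m\<^sub>r\<close> is \<open>G\<^sub>1\<close>, the whole germ, and \<open>\<psi>\<^sub>m\<^sub>i\<close> has class \<open>p\<^sub>i ^ a\<^sub>i\<close>.\<close>

lemma finite_range_repeats:
  fixes f :: "nat \<Rightarrow> 'a"
  assumes "finite (range f)"
  obtains a b where "a < b" "f a = f b"
proof -
  have "\<not> inj f"
    using assms finite_imageD infinite_UNIV_nat by blast
  then obtain a b where "a \<noteq> b" "f a = f b"
    unfolding inj_def by blast
  then show ?thesis
    using that by (metis linorder_neqE_nat)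
qed

lemma permutes_funpow_eq_id:
  assumes "finite S" "p permutes S"
  obtains k where "k > 0" "p ^^ k = id"
proof -
  have "range (\<lambda>k. p ^^ k) \<subseteq> {q. q permutes S}"
    using assms(2) permutes_funpow by blast
  then obtain a b where ab: "a < b" "p ^^ a = p ^^ b"
    using finite_range_repeats finite_subset finite_permutations[OF assms(1)] by metis
  have "inj (p ^^ a)"
    using assms(2) permutes_inj inj_fn by blast
  moreover have "(p ^^ a) ((p ^^ (b - a)) x) = (p ^^ a) x" for x
    using ab by (metis comp_apply funpow_add le_add_diff_inverse less_imp_le)
  ultimately have "p ^^ (b - a) = id"
    by (auto simp: inj_eq)
  with ab(1) show ?thesis
    using that[of "b - a"] by simp
qed

lemma bezout_mod_nat:
  fixes a b c D :: nat
  assumes "a \<noteq> 0" "gcd a b dvd c" "D > 0"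
  obtains x y where "(a * x + b * y) mod D = c mod D"
proof -
  obtain x y where xy: "a * x = b * y + gcd a b"
    using bezout_nat[OF assms(1)] by blast
  obtain k where k: "c = gcd a b * k"
    using assms(2) by blast
  have "a * (x * k) = (b * y + gcd a b) * k"
    using xy by (simp add: mult.assoc[symmetric])
  also have "\<dots> = b * (y * k) + c"
    using k by (simp add: algebra_simps)
  finally have "a * (x * k) = b * (y * k) + c" .
  moreover have "b * (y * k) + b * ((D - 1) * y * k) = D * (b * y * k)"
    using assms(3) by (cases D) (simp_all add: algebra_simps)
  ultimately have "a * (x * k) + b * ((D - 1) * y * k) = c + D * (b * y * k)"
    by simp
  then have "(a * (x * k) + b * ((D - 1) * y * k)) mod D = c mod D"
    by simp
  then show ?thesis
    using that by blast
qed

lemma complementary_divisor_nat: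
  fixes a b :: nat
  assumes "b dvd a" "a \<noteq> 0"
  shows "a div b > 0" "a div b dvd a" "a div (a div b) = b"
proof -
  obtain c where c: "a = b * c"
    using assms(1) by blast
  with assms(2) have "b \<noteq> 0" "c \<noteq> 0"
    by auto
  with c show "a div b > 0" "a div b dvd a" "a div (a div b) = b"
    by simp_all
qed

lemma Gcd_prime_power_cofactors:
  fixes d :: nat
  assumes "d \<noteq> 0"
  shows "Gcd (insert d ((\<lambda>p. d div p ^ multiplicity p d) ` prime_factors d)) = 1"
proof (rule ccontr)
  let ?g = "Gcd (insert d ((\<lambda>p. d div p ^ multiplicity p d) ` prime_factors d))"
  assume "?g \<noteq> 1"
  then obtain p where p: "prime p" "p dvd ?g"
    using prime_factor_nat by blast
  then have "p dvd d"
    by (meson Gcd_dvd dvd_trans insertI1)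
  then have "p \<in> prime_factors d"
    using p(1) assms by (simp add: in_prime_factors_iff)
  then have "p dvd d div p ^ multiplicity p d"
    using p(2) by (meson Gcd_dvd dvd_trans image_eqI insertI2)
  moreover have "\<not> p dvd d div p ^ multiplicity p d"
    using multiplicity_decompose[OF assms] p(1) not_prime_unit by blast
  ultimately show False
    by contradiction
qed

lemma zeta_pow_self: "m > 0 \<Longrightarrow> zeta m ^ m = 1"
  unfolding zeta_def DeMoivre by (simp add: cis_2pi)

lemma zeta_pow_mod: "zeta m ^ (a mod m) = zeta m ^ a"
proof (cases "m = 0")
  case False
  have "zeta m ^ a = zeta m ^ (m * (a div m) + a mod m)"
    by simp
  also have "\<dots> = (zeta m ^ m) ^ (a div m) * zeta m ^ (a mod m)"
    by (simp only: power_add power_mult)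
  finally have "zeta m ^ a = (zeta m ^ m) ^ (a div m) * zeta m ^ (a mod m)" .
  then show ?thesis
    using zeta_pow_self[of m] False by simp
qed simp

lemma zeta_mult_pow:
  assumes "m > 0"
  shows "zeta (q * m) ^ m = zeta q"
proof -
  have "real m * (2 * pi / real (q * m)) = 2 * pi / real q"
    using assms by (cases "q = 0") (simp_all add: field_simps)
  then show ?thesis
    unfolding zeta_def DeMoivre by simp
qed

lemma zeta_nonzero: "zeta m \<noteq> 0"
  by (simp add: zeta_def)

section \<open>Monomial matrices\<close>

text \<open>A pair \<open>(v, \<sigma>)\<close> encodes the monomial matrix with entry \<open>\<zeta>\<^sub>m ^ v i\<close> at position
  \<open>(i, \<sigma> i)\<close>; \<open>mon_mult\<close> is matrix multiplication in these coordinates.\<close>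

type_synonym monomial = "(nat \<Rightarrow> nat) \<times> (nat \<Rightarrow> nat)"

definition mon_mult :: "monomial \<Rightarrow> monomial \<Rightarrow> monomial" where
  "mon_mult x y = (\<lambda>i. fst x i + fst y (snd x i), snd y \<circ> snd x)"

definition mon_one :: monomial where
  "mon_one = (\<lambda>_. 0, id)"

definition mon_mat :: "nat \<Rightarrow> nat \<Rightarrow> monomial \<Rightarrow> complex mat" where
  "mon_mat n m x = mat n n (\<lambda>(i, j). if j = snd x i then zeta m ^ fst x i else 0)"

lemma mon_mult_assoc: "mon_mult (mon_mult x y) z = mon_mult x (mon_mult y z)"
  by (simp add: mon_mult_def comp_def add.assoc)

lemma mon_mult_one [simp]: "mon_mult mon_one x = x" "mon_mult x mon_one = x"
  by (simp_all add: mon_mult_def mon_one_def)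

lemma mon_mat_carrier [simp]: "mon_mat n m x \<in> carrier_mat n n"
  by (simp add: mon_mat_def)

lemma mon_mat_one: "mon_mat n m mon_one = 1\<^sub>m n"
  by (rule eq_matI) (auto simp: mon_mat_def mon_one_def)

lemma dim_mon_mat [simp]: "dim_row (mon_mat n m x) = n" "dim_col (mon_mat n m x) = n"
  by (simp_all add: mon_mat_def)

lemma index_mon_mat [simp]:
  "i < n \<Longrightarrow> j < n \<Longrightarrow> mon_mat n m x $$ (i, j) = (if j = snd x i then zeta m ^ fst x i else 0)"
  by (simp add: mon_mat_def)

lemma mon_mat_mult:
  assumes "\<And>i. i < n \<Longrightarrow> snd x i < n"
  shows "mon_mat n m x * mon_mat n m y = mon_mat n m (mon_mult x y)"
proof (rule eq_matI)
  fix i k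
  assume "i < dim_row (mon_mat n m (mon_mult x y))" "k < dim_col (mon_mat n m (mon_mult x y))"
  then have i: "i < n" and k: "k < n"
    by simp_all
  have "(mon_mat n m x * mon_mat n m y) $$ (i, k)
      = (\<Sum>j = 0..<n. (if j = snd x i then zeta m ^ fst x i else 0) * mon_mat n m y $$ (j, k))"
    using i k by (simp add: scalar_prod_def)
  also have "\<dots> = (\<Sum>j = 0..<n. if j = snd x i then zeta m ^ fst x i * mon_mat n m y $$ (j, k) else 0)"
    by (rule sum.cong) simp_all
  also have "\<dots> = zeta m ^ fst x i * mon_mat n m y $$ (snd x i, k)"
    using assms[OF i] by simp
  also have "\<dots> = mon_mat n m (mon_mult x y) $$ (i, k)"
    using i k assms[OF i] by (simp add: mon_mult_def power_add)
  finally show "(mon_mat n m x * mon_mat n m y) $$ (i, k) = mon_mat n m (mon_mult x y) $$ (i, k)" .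
qed simp_all

lemma mon_mat_cong_mod:
  assumes "\<And>i. i < n \<Longrightarrow> fst x i mod m = fst y i mod m" "\<And>i. i < n \<Longrightarrow> snd x i = snd y i"
  shows "mon_mat n m x = mon_mat n m y"
proof (rule eq_matI)
  fix i j
  assume "i < dim_row (mon_mat n m y)" "j < dim_col (mon_mat n m y)"
  then have ij: "i < n" "j < n"
    by simp_all
  have "zeta m ^ fst x i = zeta m ^ fst y i"
    using assms(1)[OF ij(1)] zeta_pow_mod by metis
  then show "mon_mat n m x $$ (i, j) = mon_mat n m y $$ (i, j)"
    using ij assms(2) by simp
qed simp_all

lemma mon_mat_scale:
  assumes "m > 0"
  shows "mon_mat n q x = mon_mat n (q * m) (\<lambda>i. m * fst x i, snd x)"
  by (rule eq_matI) (simp_all add: mon_mat_def power_mult zeta_mult_pow[OF assms])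

lemma iota_mon_mat:
  assumes "q > 0" "q dvd d" "d > 0"
  shows "iota q d (mon_mat n q x) = mon_mat n q x"
proof -
  have "iota_entry q d (zeta q ^ a) = zeta q ^ a" for a
  proof -
    define j where "j = (SOME j. j < q \<and> zeta q ^ a = zeta q ^ j)"
    have "\<exists>j. j < q \<and> zeta q ^ a = zeta q ^ j"
      using assms(1) zeta_pow_mod[of q a] by (metis mod_less_divisor)
    then have j: "j < q \<and> zeta q ^ a = zeta q ^ j"
      unfolding j_def by (rule someI_ex)
    obtain m where m: "d = q * m" "m > 0"
      using assms by (metis dvd_def gr0I mult_0_right)
    have "iota_entry q d (zeta q ^ a) = (zeta (q * m) ^ m) ^ j"
      by (simp add: iota_entry_def zeta_nonzero m(1) assms(1) flip: j_def power_mult)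
        (simp add: mult.commute)
    then show ?thesis
      using j zeta_mult_pow[OF m(2)] by simp
  qed
  then show ?thesis
    by (intro eq_matI) (auto simp: iota_def mon_mat_def iota_entry_def)
qed

section \<open>Words in a cycle set\<close>

definition unit_fun :: "nat \<Rightarrow> nat \<Rightarrow> nat" where
  "unit_fun s = (\<lambda>i. if i = s then 1 else 0)"

definition supported :: "nat \<Rightarrow> (nat \<Rightarrow> nat) \<Rightarrow> bool" where
  "supported n v \<longleftrightarrow> (\<forall>i\<ge>n. v i = 0)"

definition id_outside :: "nat \<Rightarrow> (nat \<Rightarrow> nat) \<Rightarrow> nat \<Rightarrow> nat" where
  "id_outside n f = (\<lambda>j. if j < n then f j else j)"

fun eval_word :: "nat \<Rightarrow> (nat \<Rightarrow> nat \<Rightarrow> nat) \<Rightarrow> nat list \<Rightarrow> monomial" where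
  "eval_word n op [] = mon_one"
| "eval_word n op (s # w) = mon_mult (unit_fun s, id_outside n (op s)) (eval_word n op w)"

lemma fst_eval_word_Cons:
  "fst (eval_word n op (s # w)) = (\<lambda>i. unit_fun s i + fst (eval_word n op w) (id_outside n (op s) i))"
  by (simp add: mon_mult_def)

lemma snd_eval_word_Cons:
  "snd (eval_word n op (s # w)) = snd (eval_word n op w) \<circ> id_outside n (op s)"
  by (simp add: mon_mult_def)

declare eval_word.simps(2) [simp del]

lemma eval_word_Cons_cong:
  "eval_word n op x = eval_word n op y \<Longrightarrow> eval_word n op (s # x) = eval_word n op (s # y)"
  by (simp add: eval_word.simps)

lemma fst_eval_word_Cons_cong:
  "fst (eval_word n op x) = fst (eval_word n op y) \<Longrightarrow>
    fst (eval_word n op (s # x)) = fst (eval_word n op (s # y))"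
  by (simp add: fst_eval_word_Cons)

lemma eval_word_append: "eval_word n op (w1 @ w2) = mon_mult (eval_word n op w1) (eval_word n op w2)"
  by (induction w1) (simp_all add: eval_word.simps mon_mult_assoc)

lemma snd_eval_word_replicate:
  "snd (eval_word n op (concat (replicate k w))) = snd (eval_word n op w) ^^ k"
  by (induction k) (simp_all add: eval_word_append mon_mult_def mon_one_def funpow_swap1)

lemma germ_gen_eq_mon_mat:
  "germ_gen n op s = mon_mat n (cs_class n op) (unit_fun s, id_outside n (op s))"
proof (rule eq_matI)
  fix i k
  assume "i < dim_row (mon_mat n (cs_class n op) (unit_fun s, id_outside n (op s)))"
    "k < dim_col (mon_mat n (cs_class n op) (unit_fun s, id_outside n (op s)))"
  then have i: "i < n" and k: "k < n"
    by simp_all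
  let ?z = "zeta (cs_class n op)"
  have "germ_gen n op s $$ (i, k)
      = (\<Sum>j = 0..<n. (if i = j then if i = s then ?z else 1 else 0) * (if k = op s j then 1 else 0))"
    using i k by (simp add: germ_gen_def diag_at_def perm_mat_def cs_psi_def scalar_prod_def)
  also have "\<dots> = (\<Sum>j = 0..<n. if j = i then (if i = s then ?z else 1) * (if k = op s i then 1 else 0) else 0)"
    by (rule sum.cong) auto
  finally show "germ_gen n op s $$ (i, k) = mon_mat n (cs_class n op) (unit_fun s, id_outside n (op s)) $$ (i, k)"
    using i k by (simp add: unit_fun_def id_outside_def)
qed (simp_all add: germ_gen_def diag_at_def perm_mat_def)

lemma unit_fun_inj: "inj p \<Longrightarrow> unit_fun (p t) (p i) = unit_fun t i"
  by (simp add: unit_fun_def inj_eq)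

lemma id_outside_permutes:
  "bij_betw f {..<n} {..<n} \<Longrightarrow> id_outside n f permutes {..<n}"
  by (rule bij_imp_permutes) (auto simp: id_outside_def bij_betw_def inj_on_def image_def)

lemma supported_comp_permutes:
  "supported n v \<Longrightarrow> p permutes {..<n} \<Longrightarrow> supported n (v \<circ> p)"
  by (simp add: supported_def permutes_not_in)

lemma id_outside_comp:
  "(\<And>j. j < n \<Longrightarrow> g j < n) \<Longrightarrow> id_outside n f \<circ> id_outside n g = id_outside n (f \<circ> g)"
  by (auto simp: id_outside_def fun_eq_iff)

lemma cs_psik_self: "cs_psik op k s s = (cs_T op ^^ k) s"
  by (induction k arbitrary: s) (simp_all add: cs_psi_def cs_T_def funpow_swap1)

lemma cs_psik_add: "cs_psik op (a + b) s = cs_psik op b ((cs_T op ^^ a) s) \<circ> cs_psik op a s"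
  by (induction a arbitrary: s) (simp_all add: funpow_swap1 comp_assoc)

lemma cs_psik_cs_psik: "cs_psik (cs_psik op m) k = cs_psik op (k * m)"
proof -
  have "cs_psik (cs_psik op m) k s = cs_psik op (k * m) s" for s
  proof (induction k arbitrary: s)
    case (Suc k)
    have "cs_T (cs_psik op m) s = (cs_T op ^^ m) s" "cs_psi (cs_psik op m) s = cs_psik op m s"
      by (simp_all add: cs_T_def[of "cs_psik op m"] cs_psik_self cs_psi_def)
    then have "cs_psik (cs_psik op m) (Suc k) s = cs_psik op (k * m) ((cs_T op ^^ m) s) \<circ> cs_psik op m s"
      using Suc by simp
    also have "\<dots> = cs_psik op (m + k * m) s"
      by (simp only: cs_psik_add)
    finally show ?case
      by (simp add: add.commute)
  qed simp
  then show ?thesis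
    by blast
qed

fun orbit_word :: "(nat \<Rightarrow> nat \<Rightarrow> nat) \<Rightarrow> nat \<Rightarrow> nat \<Rightarrow> nat list" where
  "orbit_word op s 0 = []"
| "orbit_word op s (Suc k) = s # orbit_word op (cs_T op s) k"

definition expand_word :: "(nat \<Rightarrow> nat \<Rightarrow> nat) \<Rightarrow> nat \<Rightarrow> nat list \<Rightarrow> nat list" where
  "expand_word op m w = concat (map (\<lambda>s. orbit_word op s m) w)"

definition psi_period :: "nat \<Rightarrow> (nat \<Rightarrow> nat \<Rightarrow> nat) \<Rightarrow> nat \<Rightarrow> bool" where
  "psi_period n op k \<longleftrightarrow> (\<forall>s<n. id_outside n (cs_psik op k s) = id)"

lemma cs_class_eq_Least: "cs_class n op = (LEAST d. d \<ge> 1 \<and> psi_period n op d)"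
  unfolding cs_class_def psi_period_def id_outside_def by (simp add: fun_eq_iff)

section \<open>The structure monoid of a finite cycle set\<close>

locale finite_cycle_set =
  fixes n :: nat and op :: "nat \<Rightarrow> nat \<Rightarrow> nat"
  assumes cycle_set: "cycle_set n op"
begin

abbreviation perm :: "nat \<Rightarrow> nat \<Rightarrow> nat" where
  "perm s \<equiv> id_outside n (op s)"

lemma op_bij: "s < n \<Longrightarrow> bij_betw (op s) {..<n} {..<n}"
  using cycle_set by (simp add: cycle_set_def)

lemma op_less: "s < n \<Longrightarrow> j < n \<Longrightarrow> op s j < n"
  using op_bij by (meson bij_betwE lessThan_iff)

lemma op_cycle_law: "s < n \<Longrightarrow> t < n \<Longrightarrow> u < n \<Longrightarrow> op (op s t) (op s u) = op (op t s) (op t u)"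
  using cycle_set by (simp add: cycle_set_def)

lemma perm_permutes: "s < n \<Longrightarrow> perm s permutes {..<n}"
  by (rule id_outside_permutes[OF op_bij])

lemma eval_word_permutes: "w \<in> lists {..<n} \<Longrightarrow> snd (eval_word n op w) permutes {..<n}"
  by (induction w) (auto simp: mon_one_def snd_eval_word_Cons intro: permutes_compose perm_permutes)

lemma eval_word_supported: "w \<in> lists {..<n} \<Longrightarrow> supported n (fst (eval_word n op w))"
  by (induction w) (auto simp: mon_one_def supported_def unit_fun_def id_outside_def fst_eval_word_Cons)

lemma sum_eval_word: "w \<in> lists {..<n} \<Longrightarrow> (\<Sum>i<n. fst (eval_word n op w) i) = length w"
proof (induction w)
  case (Cons s w)
  then have "(\<Sum>i<n. fst (eval_word n op w) (perm s i)) = length w"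
    using sum.permute[OF perm_permutes, of s "fst (eval_word n op w)"] by (simp add: comp_def)
  then show ?case
    using Cons.prems by (simp add: fst_eval_word_Cons sum.distrib unit_fun_def)
qed (simp add: mon_one_def)

definition left_quotient :: "nat \<Rightarrow> (nat \<Rightarrow> nat) \<Rightarrow> nat \<Rightarrow> nat" where
  "left_quotient s v = (\<lambda>i. v i - unit_fun s i) \<circ> inv_into UNIV (perm s)"

lemma fst_eval_word_Cons_eq_iff:
  assumes "s < n" "v s \<ge> 1"
  shows "fst (eval_word n op (s # x)) = v \<longleftrightarrow> fst (eval_word n op x) = left_quotient s v"
proof -
  let ?u = "fst (eval_word n op x)"
  have "fst (eval_word n op (s # x)) = v \<longleftrightarrow> ?u \<circ> perm s = (\<lambda>i. v i - unit_fun s i)"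
    using assms(2) by (auto simp: fst_eval_word_Cons fun_eq_iff unit_fun_def)
  also have "\<dots> \<longleftrightarrow> ?u = left_quotient s v"
    using permutes_inverses[OF perm_permutes[OF assms(1)]] unfolding left_quotient_def
    by (auto simp: fun_eq_iff) metis
  finally show ?thesis .
qed

lemma supported_left_quotient: "s < n \<Longrightarrow> supported n v \<Longrightarrow> supported n (left_quotient s v)"
  unfolding left_quotient_def
  by (rule supported_comp_permutes) (auto simp: supported_def unit_fun_def intro: permutes_inv perm_permutes)

lemma sum_left_quotient:
  assumes "s < n" "v s \<ge> 1"
  shows "(\<Sum>i<n. left_quotient s v i) = (\<Sum>i<n. v i) - 1"
proof -
  have "(\<Sum>i<n. left_quotient s v i) = (\<Sum>i<n. v i - unit_fun s i)"
    using sum.permute[OF permutes_inv[OF perm_permutes[OF assms(1)]], of "\<lambda>i. v i - unit_fun s i"]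
    by (simp add: left_quotient_def)
  also have "\<dots> = (\<Sum>i<n. v i) - (\<Sum>i<n. unit_fun s i)"
    using assms(2) by (intro sum_subtractf_nat) (auto simp: unit_fun_def)
  finally show ?thesis
    using assms(1) by (simp add: unit_fun_def)
qed

lemma exists_word: "supported n v \<Longrightarrow> \<exists>w\<in>lists {..<n}. fst (eval_word n op w) = v"
proof (induction "\<Sum>i<n. v i" arbitrary: v)
  case 0
  then have "v = fst (eval_word n op [])"
    by (auto simp: supported_def mon_one_def fun_eq_iff not_less[symmetric])
  then show ?case
    by blast
next
  case (Suc k)
  then obtain s where s: "s < n" "v s \<ge> 1"
    by (metis lessThan_iff less_one not_le sum_eq_0_iff finite_lessThan nat.distinct(1))
  moreover have "k = (\<Sum>i<n. left_quotient s v i)"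
    using Suc.hyps(2) sum_left_quotient[of s v] s by simp
  ultimately obtain x where "x \<in> lists {..<n}" "fst (eval_word n op x) = left_quotient s v"
    using Suc.hyps(1) supported_left_quotient Suc.prems by blast
  then show ?case
    using s fst_eval_word_Cons_eq_iff by (metis Cons_in_lists_iff lessThan_iff)
qed

lemma exists_word_Cons:
  "s < n \<Longrightarrow> supported n v \<Longrightarrow> v s \<ge> 1 \<Longrightarrow> \<exists>x\<in>lists {..<n}. fst (eval_word n op (s # x)) = v"
  using exists_word[OF supported_left_quotient] fst_eval_word_Cons_eq_iff by blast

lemma fst_eval_word_Cons_cancel:
  assumes "s < n" "fst (eval_word n op (s # x)) = fst (eval_word n op (s # y))"
  shows "fst (eval_word n op x) = fst (eval_word n op y)"
proof -
  let ?v = "fst (eval_word n op (s # y))"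
  have "?v s \<ge> 1"
    by (simp add: fst_eval_word_Cons unit_fun_def)
  note quotient = fst_eval_word_Cons_eq_iff[of s ?v, OF assms(1) this, THEN iffD1]
  show ?thesis
    using quotient[OF assms(2)] quotient[OF refl] by (rule trans[OF _ sym])
qed

lemma length_eq_if_fst_eval_word_eq:
  assumes "w1 \<in> lists {..<n}" "w2 \<in> lists {..<n}" "fst (eval_word n op w1) = fst (eval_word n op w2)"
  shows "length w1 = length w2"
  using sum_eval_word[OF assms(1)] sum_eval_word[OF assms(2)] assms(3) by simp

lemma exists_word_Cons_Cons:
  assumes "s # x1 \<in> lists {..<n}" "t # x2 \<in> lists {..<n}" "s \<noteq> t"
    and "fst (eval_word n op (s # x1)) = fst (eval_word n op (t # x2))"
  obtains y where "y \<in> lists {..<n}" "fst (eval_word n op (s # op s t # y)) = fst (eval_word n op (s # x1))"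
proof -
  let ?v = "fst (eval_word n op (s # x1))"
  have st: "s < n" "t < n"
    using assms(1,2) by simp_all
  have "?v t \<ge> 1"
    unfolding assms(4) by (simp add: fst_eval_word_Cons unit_fun_def)
  have x1: "x1 \<in> lists {..<n}"
    using assms(1) by simp
  have "fst (eval_word n op x1) (op s t) = ?v t"
    using st assms(3) by (simp add: fst_eval_word_Cons unit_fun_def id_outside_def)
  then obtain y where "y \<in> lists {..<n}" "fst (eval_word n op (op s t # y)) = fst (eval_word n op x1)"
    using exists_word_Cons[OF op_less[OF st] eval_word_supported[OF x1]] \<open>?v t \<ge> 1\<close> by force
  then show ?thesis
    using that fst_eval_word_Cons_cong by blast
qed

lemma eval_word_cycle_relation:
  assumes "s < n" "t < n"
  shows "eval_word n op (s # op s t # x) = eval_word n op (t # op t s # x)"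
proof -
  have perm_cycle_law: "perm (op s t) \<circ> perm s = perm (op t s) \<circ> perm t"
    using assms op_less op_cycle_law by (auto simp: id_outside_def fun_eq_iff)
  have "perm s t = op s t" "perm t s = op t s"
    using assms by (simp_all add: id_outside_def)
  then have "unit_fun (op s t) (perm s i) = unit_fun t i" "unit_fun (op t s) (perm t i) = unit_fun s i" for i
    using unit_fun_inj permutes_inj[OF perm_permutes] assms by metis+
  then show ?thesis
    using perm_cycle_law
    by (simp add: fst_eval_word_Cons snd_eval_word_Cons prod_eq_iff fun_eq_iff comp_assoc)
qed

text \<open>Two words with the same exponents either start with the same letter, which cancels, or
  with distinct letters \<open>s, t\<close>; then both can be continued from the two sides of the defining
  relation \<open>s (s * t) = t (t * s)\<close> of the structure monoid.\<close>

lemma eval_word_eq_Cons_step: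
  assumes IH: "\<And>x y. x \<in> lists {..<n} \<Longrightarrow> y \<in> lists {..<n} \<Longrightarrow> length x < k \<Longrightarrow>
      fst (eval_word n op x) = fst (eval_word n op y) \<Longrightarrow> eval_word n op x = eval_word n op y"
    and w: "s # x1 \<in> lists {..<n}" "t # x2 \<in> lists {..<n}" "length x1 < k" "length x2 < k"
    and eq: "fst (eval_word n op (s # x1)) = fst (eval_word n op (t # x2))"
  shows "eval_word n op (s # x1) = eval_word n op (t # x2)"
proof -
  have cancel: "eval_word n op (r # x) = eval_word n op (r # y)"
    if "r # x \<in> lists {..<n}" "r # y \<in> lists {..<n}" "length x < k"
      and "fst (eval_word n op (r # x)) = fst (eval_word n op (r # y))" for r x y
  proof -
    have "r < n" "x \<in> lists {..<n}" "y \<in> lists {..<n}"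
      using that(1,2) by simp_all
    moreover have "fst (eval_word n op x) = fst (eval_word n op y)"
      using fst_eval_word_Cons_cancel \<open>r < n\<close> that(4) .
    ultimately have "eval_word n op x = eval_word n op y"
      using IH that(3) by blast
    then show ?thesis
      by (rule eval_word_Cons_cong)
  qed
  show ?thesis
  proof (cases "s = t")
    case True
    then show ?thesis
      using cancel w eq by simp
  next
    case False
    have st: "s < n" "t < n"
      using w by simp_all
    obtain y where y: "y \<in> lists {..<n}" "fst (eval_word n op (s # op s t # y)) = fst (eval_word n op (s # x1))"
      using exists_word_Cons_Cons[OF w(1,2) False eq] by blast
    have "eval_word n op (s # x1) = eval_word n op (s # op s t # y)"
      by (rule cancel) (use w y st op_less in auto)
    also have "\<dots> = eval_word n op (t # op t s # y)"
      by (rule eval_word_cycle_relation[OF st])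
    also have "\<dots> = eval_word n op (t # x2)"
      by (rule sym, rule cancel) (use w y eq st op_less eval_word_cycle_relation[OF st] in auto)
    finally show ?thesis .
  qed
qed

lemma eval_word_eqI:
  assumes "w1 \<in> lists {..<n}" "w2 \<in> lists {..<n}" "fst (eval_word n op w1) = fst (eval_word n op w2)"
  shows "eval_word n op w1 = eval_word n op w2"
  using assms
proof (induction "length w1" arbitrary: w1 w2 rule: less_induct)
  case less
  have length_eq: "length w1 = length w2"
    using length_eq_if_fst_eval_word_eq less.prems .
  show ?case
  proof (cases w1)
    case Nil
    then show ?thesis
      using length_eq by simp
  next
    case (Cons s x1)
    then obtain t x2 where w2: "w2 = t # x2"
      using length_eq by (cases w2) auto
    show ?thesis
      unfolding Cons w2
    proof (rule eval_word_eq_Cons_step[where k = "length w1"])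
      show "eval_word n op x = eval_word n op y"
        if "x \<in> lists {..<n}" "y \<in> lists {..<n}" "length x < length w1"
          and "fst (eval_word n op x) = fst (eval_word n op y)" for x y
        using less.hyps[OF that(3)] that(1,2,4) by blast
    qed (use less.prems Cons w2 length_eq in auto)
  qed
qed

lemma T_less: "s < n \<Longrightarrow> cs_T op s < n"
  by (simp add: cs_T_def op_less)

lemma psik_bij: "s < n \<Longrightarrow> bij_betw (cs_psik op k s) {..<n} {..<n}"
proof (induction k arbitrary: s)
  case (Suc k)
  then show ?case
    using bij_betw_trans[OF op_bij Suc.IH[OF T_less]] by (simp add: cs_psi_def comp_def)
qed (simp add: bij_betw_def)

lemma psik_less: "s < n \<Longrightarrow> j < n \<Longrightarrow> cs_psik op k s j < n"
  using psik_bij by (meson bij_betwE lessThan_iff)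

lemma psik_permutes: "s < n \<Longrightarrow> id_outside n (cs_psik op k s) permutes {..<n}"
  by (rule id_outside_permutes[OF psik_bij])

lemma orbit_word_lists: "s < n \<Longrightarrow> orbit_word op s k \<in> lists {..<n}"
  by (induction k arbitrary: s) (simp_all add: T_less)

lemma expand_word_lists: "w \<in> lists {..<n} \<Longrightarrow> expand_word op m w \<in> lists {..<n}"
  unfolding expand_word_def by (induction w) (simp_all add: orbit_word_lists)

lemma eval_orbit_word:
  "s < n \<Longrightarrow> eval_word n op (orbit_word op s k) = (\<lambda>i. k * unit_fun s i, id_outside n (cs_psik op k s))"
proof (induction k arbitrary: s)
  case 0
  then show ?case
    by (simp add: mon_one_def id_outside_def fun_eq_iff)
next
  case (Suc k)
  have "perm s s = cs_T op s"
    using Suc.prems by (simp add: id_outside_def cs_T_def)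
  then have "unit_fun (cs_T op s) (perm s i) = unit_fun s i" for i
    using unit_fun_inj permutes_inj[OF perm_permutes[OF Suc.prems]] by metis
  moreover have "id_outside n (cs_psik op k (cs_T op s)) \<circ> perm s = id_outside n (cs_psik op (Suc k) s)"
    using id_outside_comp[of n "op s"] op_less Suc.prems by (simp add: cs_psi_def)
  ultimately show ?case
    using Suc.IH[OF T_less[OF Suc.prems]]
    by (simp add: eval_word.simps mon_mult_def cs_psi_def comp_def)
qed

lemma eval_expand_word:
  "w \<in> lists {..<n} \<Longrightarrow> eval_word n op (expand_word op m w)
    = (\<lambda>i. m * fst (eval_word n (cs_psik op m) w) i, snd (eval_word n (cs_psik op m) w))"
proof (induction w)
  case Nil
  then show ?case
    by (simp add: expand_word_def mon_one_def fun_eq_iff)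
next
  case (Cons s w)
  then have "eval_word n op (expand_word op m (s # w))
      = mon_mult (eval_word n op (orbit_word op s m)) (eval_word n op (expand_word op m w))"
    by (simp add: expand_word_def eval_word_append)
  then show ?case
    using Cons by (simp add: eval_orbit_word eval_word.simps mon_mult_def algebra_simps comp_def)
qed

lemma cycle_set_psik: "cycle_set n (cs_psik op m)"
  unfolding cycle_set_def
proof (intro conjI allI impI)
  fix s t u
  assume stu: "s < n" "t < n" "u < n"
  define a where "a = cs_psik op m s t"
  define b where "b = cs_psik op m t s"
  have ab: "a < n" "b < n"
    unfolding a_def b_def using psik_less stu by auto
  let ?\<Psi> = "\<lambda>s. id_outside n (cs_psik op m s)"
  let ?W1 = "orbit_word op s m @ orbit_word op a m" and ?W2 = "orbit_word op t m @ orbit_word op b m"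
  have "?\<Psi> s t = a" "?\<Psi> t s = b"
    using stu by (simp_all add: a_def b_def id_outside_def)
  then have "unit_fun a (?\<Psi> s i) = unit_fun t i" "unit_fun b (?\<Psi> t i) = unit_fun s i" for i
    using unit_fun_inj[OF permutes_inj[OF psik_permutes]] stu by metis+
  then have "fst (eval_word n op ?W1) = fst (eval_word n op ?W2)"
    using stu ab by (simp add: eval_word_append eval_orbit_word mon_mult_def fun_eq_iff)
  then have "eval_word n op ?W1 = eval_word n op ?W2"
    using stu ab by (intro eval_word_eqI) (simp_all add: orbit_word_lists)
  then have "snd (eval_word n op ?W1) u = snd (eval_word n op ?W2) u"
    by simp
  then have "?\<Psi> a (?\<Psi> s u) = ?\<Psi> b (?\<Psi> t u)"
    using stu ab by (simp add: eval_word_append eval_orbit_word mon_mult_def)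
  then show "cs_psik op m (cs_psik op m s t) (cs_psik op m s u)
      = cs_psik op m (cs_psik op m t s) (cs_psik op m t u)"
    using stu psik_less unfolding a_def b_def by (simp add: id_outside_def)
qed (rule psik_bij)

lemma finite_cycle_set_psik: "finite_cycle_set n (cs_psik op m)"
  by unfold_locales (rule cycle_set_psik)

subsection \<open>The class\<close>

lemma psik_add_trivial:
  assumes "s < n" "id_outside n (cs_psik op c s) = id"
  shows "id_outside n (cs_psik op (c + k) s) = id_outside n (cs_psik op k s)"
proof -
  have "cs_psik op c s s = s"
    using fun_cong[OF assms(2), of s] assms(1) unfolding id_outside_def by simp
  then have "(cs_T op ^^ c) s = s"
    by (simp add: cs_psik_self)
  moreover have "id_outside n (cs_psik op k s \<circ> cs_psik op c s)
      = id_outside n (cs_psik op k s) \<circ> id_outside n (cs_psik op c s)"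
    using id_outside_comp psik_less assms(1) by metis
  ultimately show ?thesis
    using assms(2) by (simp add: cs_psik_add)
qed

lemma psik_period_mult:
  assumes "s < n" "id_outside n (cs_psik op c s) = id"
  shows "id_outside n (cs_psik op (q * c) s) = id"
proof (induction q)
  case 0
  then show ?case
    by (simp add: id_outside_def fun_eq_iff)
next
  case (Suc q)
  then show ?case
    using psik_add_trivial[OF assms, of "q * c"] by simp
qed

text \<open>Pigeonhole gives \<open>a < b\<close> with \<open>\<psi>\<^sub>a(s) = \<psi>\<^sub>b(s)\<close>. If \<open>y\<close> undoes the permutation of the orbit
  word of length \<open>a\<close>, then the words \<open>orbit\<^sub>b y\<close> and \<open>orbit\<^sub>a y orbit\<^sub>b\<^sub>-\<^sub>a\<close> have the same
  exponents; comparing their permutations gives \<open>\<psi>\<^sub>b\<^sub>-\<^sub>a(s) = id\<close>.\<close>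

lemma exists_psik_period:
  assumes "s < n"
  obtains c where "c > 0" "id_outside n (cs_psik op c s) = id"
proof -
  let ?f = "\<lambda>k. id_outside n (cs_psik op k s)"
  have "range ?f \<subseteq> {p. p permutes {..<n}}"
    using psik_permutes[OF assms] by blast
  then obtain a b where ab: "a < b" "?f a = ?f b"
    using finite_range_repeats finite_subset finite_permutations[of "{..<n}"] by (metis finite_lessThan)
  define w where "w = orbit_word op s a"
  have w: "w \<in> lists {..<n}" "eval_word n op w = (\<lambda>i. a * unit_fun s i, ?f a)"
    unfolding w_def using assms by (simp_all add: orbit_word_lists eval_orbit_word)
  obtain K where K: "K > 0" "?f a ^^ K = id"
    using permutes_funpow_eq_id[OF _ psik_permutes[OF assms]] by blast
  define y where "y = concat (replicate (K - 1) w)"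
  have y: "y \<in> lists {..<n}" "snd (eval_word n op y) \<circ> ?f a = id"
    using w K unfolding y_def by (auto simp: snd_eval_word_replicate funpow_swap1 simp flip: funpow_Suc_right)
  have fb: "?f b = ?f a" and y_inv: "snd (eval_word n op y) (?f a i) = i" for i
    using ab(2) fun_cong[OF y(2), of i] by simp_all
  let ?X = "orbit_word op s b @ y" and ?Y = "w @ y @ orbit_word op s (b - a)"
  have "fst (eval_word n op ?X) = fst (eval_word n op ?Y)"
    using ab(1) assms
    by (simp add: eval_word_append eval_orbit_word w(2) mon_mult_def fb y_inv fun_eq_iff unit_fun_def)
  then have "eval_word n op ?X = eval_word n op ?Y"
    using assms w(1) y(1) by (intro eval_word_eqI) (simp_all add: orbit_word_lists)
  moreover have "snd (eval_word n op ?X) = id"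
    using assms y(2) by (simp add: eval_word_append eval_orbit_word mon_mult_def fb)
  moreover have "snd (eval_word n op ?Y) = ?f (b - a)"
    using assms y(2) by (simp add: eval_word_append eval_orbit_word w(2) mon_mult_def comp_assoc)
  ultimately show ?thesis
    using that[of "b - a"] ab(1) by simp
qed

lemma exists_psi_period: "\<exists>D>0. psi_period n op D"
proof -
  have "\<forall>s\<in>{..<n}. \<exists>c. c > 0 \<and> id_outside n (cs_psik op c s) = id"
    using exists_psik_period by (metis lessThan_iff)
  then obtain c where c: "\<forall>s\<in>{..<n}. c s > 0 \<and> id_outside n (cs_psik op (c s) s) = id"
    by (auto dest!: bchoice)
  have "psi_period n op (\<Prod>s<n. c s)"
    unfolding psi_period_def
  proof (intro allI impI)
    fix s
    assume s: "s < n"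
    have "c s dvd (\<Prod>s<n. c s)"
      using s by (intro dvd_prodI) simp_all
    then obtain q where "(\<Prod>s<n. c s) = q * c s"
      by (metis dvd_def mult.commute)
    then show "id_outside n (cs_psik op (\<Prod>s<n. c s) s) = id"
      using psik_period_mult s c by simp
  qed
  then show ?thesis
    using c by (intro exI[of _ "\<Prod>s<n. c s"]) (simp add: prod_pos)
qed

lemma psi_period_add:
  "psi_period n op a \<Longrightarrow> psi_period n op (a + b) \<longleftrightarrow> psi_period n op b"
  by (simp add: psi_period_def psik_add_trivial)

abbreviation d :: nat where
  "d \<equiv> cs_class n op"

lemma class_pos: "d > 0" and psi_period_class: "psi_period n op d"
proof -
  obtain D where "D \<ge> 1 \<and> psi_period n op D"
    using exists_psi_period by (auto simp: Suc_le_eq)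
  then have "d \<ge> 1 \<and> psi_period n op d"
    unfolding cs_class_eq_Least by (rule LeastI)
  then show "d > 0" "psi_period n op d"
    by auto
qed

lemma psi_period_iff_class_dvd: "psi_period n op k \<longleftrightarrow> d dvd k"
proof
  have multiple: "psi_period n op (q * d)" for q
  proof (induction q)
    case 0
    then show ?case
      by (simp add: psi_period_def id_outside_def fun_eq_iff)
  next
    case (Suc q)
    then show ?case
      using psi_period_add[OF psi_period_class, of "q * d"] by simp
  qed
  show "d dvd k \<Longrightarrow> psi_period n op k"
    using multiple by (auto simp: mult.commute)
  assume "psi_period n op k"
  then have "psi_period n op (k mod d)"
    using psi_period_add[OF multiple, of "k div d" "k mod d"] by (simp only: div_mult_mod_eq)
  moreover have "\<not> (k mod d \<ge> 1 \<and> psi_period n op (k mod d))"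
    using class_pos unfolding cs_class_eq_Least by (intro not_less_Least) simp
  ultimately show "d dvd k"
    by (simp add: dvd_eq_mod_eq_0)
qed

lemma class_psik:
  assumes "m > 0" "m dvd d"
  shows "cs_class n (cs_psik op m) = d div m"
proof -
  have "psi_period n (cs_psik op m) k \<longleftrightarrow> d div m dvd k" for k
  proof -
    have "psi_period n (cs_psik op m) k \<longleftrightarrow> (d div m) * m dvd k * m"
      using assms(2) by (simp add: psi_period_def cs_psik_cs_psik psi_period_iff_class_dvd[unfolded psi_period_def])
    then show ?thesis
      using assms(1) by (simp add: dvd_mult_cancel2)
  qed
  then have "cs_class n (cs_psik op m) = (LEAST k. k \<ge> 1 \<and> d div m dvd k)"
    by (simp add: cs_class_eq_Least)
  also have "\<dots> = d div m"
  proof (rule Least_equality)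
    show "d div m \<ge> 1 \<and> d div m dvd d div m"
      using assms class_pos by (auto simp: Suc_le_eq div_greater_zero_iff dvd_imp_le)
  qed (simp add: dvd_imp_le)
  finally show ?thesis .
qed

lemma exists_word_class_multiple:
  assumes "supported n y"
  obtains z where "z \<in> lists {..<n}" "eval_word n op z = (\<lambda>i. d * y i, id)"
proof -
  interpret P: finite_cycle_set n "cs_psik op d"
    by (rule finite_cycle_set_psik)
  obtain u where u: "u \<in> lists {..<n}" "fst (eval_word n (cs_psik op d) u) = y"
    using P.exists_word[OF assms] by blast
  have "snd (eval_word n (cs_psik op d) u) = id"
    using u(1) psi_period_class
    by (induction u) (simp_all add: snd_eval_word_Cons mon_one_def psi_period_def)
  then show ?thesis
    using that[of "expand_word op d u"] u by (simp add: expand_word_lists eval_expand_word)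
qed

lemma exists_word_add_class_multiple:
  assumes "w \<in> lists {..<n}" "supported n x"
  obtains w' where "w' \<in> lists {..<n}" "eval_word n op w' = (\<lambda>i. fst (eval_word n op w) i + d * x i, snd (eval_word n op w))"
proof -
  let ?\<sigma> = "snd (eval_word n op w)"
  have \<sigma>: "?\<sigma> permutes {..<n}"
    by (rule eval_word_permutes[OF assms(1)])
  obtain z where z: "z \<in> lists {..<n}" "eval_word n op z = (\<lambda>i. d * (x \<circ> inv_into UNIV ?\<sigma>) i, id)"
    using exists_word_class_multiple supported_comp_permutes[OF assms(2) permutes_inv[OF \<sigma>]] by blast
  show ?thesis
    using that[of "w @ z"] assms(1) z permutes_inverses(2)[OF \<sigma>]
    by (simp add: eval_word_append mon_mult_def)
qed

lemma eval_word_snd_eq_mod: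
  assumes "w1 \<in> lists {..<n}" "w2 \<in> lists {..<n}"
    and "\<And>i. i < n \<Longrightarrow> fst (eval_word n op w1) i mod d = fst (eval_word n op w2) i mod d"
  shows "snd (eval_word n op w1) = snd (eval_word n op w2)"
proof -
  define M where "M i = max (fst (eval_word n op w1) i) (fst (eval_word n op w2) i)" for i
  have raise: "\<exists>w'\<in>lists {..<n}. eval_word n op w' = (M, snd (eval_word n op w))"
    if w: "w \<in> lists {..<n}" and mod: "\<And>i. fst (eval_word n op w) i mod d = M i mod d"
      and le: "\<And>i. fst (eval_word n op w) i \<le> M i" for w
  proof -
    let ?x = "\<lambda>i. (M i - fst (eval_word n op w) i) div d"
    have "supported n ?x"
      using eval_word_supported assms(1,2) unfolding supported_def M_def by auto
    then obtain w' where "w' \<in> lists {..<n}"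
      "eval_word n op w' = (\<lambda>i. fst (eval_word n op w) i + d * ?x i, snd (eval_word n op w))"
      using exists_word_add_class_multiple[OF w] by blast
    moreover have "fst (eval_word n op w) i + d * ?x i = M i" for i
    proof -
      have "d dvd M i - fst (eval_word n op w) i"
        using mod_eq_dvd_iff_nat[OF le[of i], of d] mod[of i] by simp
      then show ?thesis
        using le[of i] by (simp add: dvd_mult_div_cancel)
    qed
    ultimately show ?thesis
      by auto
  qed
  have "fst (eval_word n op w1) i mod d = M i mod d" "fst (eval_word n op w2) i mod d = M i mod d"
    and "fst (eval_word n op w1) i \<le> M i" "fst (eval_word n op w2) i \<le> M i" for i
    using assms(3)[of i] eval_word_supported[OF assms(1)] eval_word_supported[OF assms(2)]
    by (cases "i < n"; simp add: M_def max_def supported_def)+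
  then obtain w1' w2' where "w1' \<in> lists {..<n}" "eval_word n op w1' = (M, snd (eval_word n op w1))"
    and "w2' \<in> lists {..<n}" "eval_word n op w2' = (M, snd (eval_word n op w2))"
    using raise[OF assms(1)] raise[OF assms(2)] by blast
  then show ?thesis
    using eval_word_eqI[of w1' w2'] by simp
qed

subsection \<open>The germ\<close>

lemma mon_mat_eval_word_append:
  "w1 \<in> lists {..<n} \<Longrightarrow>
    mon_mat n m (eval_word n op w1) * mon_mat n m (eval_word n op w2) = mon_mat n m (eval_word n op (w1 @ w2))"
  using mon_mat_mult permutes_in_image[OF eval_word_permutes] by (simp add: eval_word_append)

lemma exists_word_append:
  assumes "w \<in> lists {..<n}" "supported n u"
  obtains w' where "w' \<in> lists {..<n}" "fst (eval_word n op w') = u \<circ> inv_into UNIV (snd (eval_word n op w))"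
    "fst (eval_word n op (w @ w')) = (\<lambda>i. fst (eval_word n op w) i + u i)"
proof -
  let ?\<sigma> = "snd (eval_word n op w)"
  have \<sigma>: "?\<sigma> permutes {..<n}"
    by (rule eval_word_permutes[OF assms(1)])
  obtain w' where "w' \<in> lists {..<n}" "fst (eval_word n op w') = u \<circ> inv_into UNIV ?\<sigma>"
    using exists_word supported_comp_permutes[OF assms(2) permutes_inv[OF \<sigma>]] by blast
  then show ?thesis
    using that permutes_inverses(2)[OF \<sigma>] by (simp add: eval_word_append mon_mult_def)
qed

lemma mon_mat_eval_word_mod:
  assumes "w1 \<in> lists {..<n}" "w2 \<in> lists {..<n}"
    and "\<And>i. i < n \<Longrightarrow> fst (eval_word n op w1) i mod d = fst (eval_word n op w2) i mod d"
  shows "mon_mat n d (eval_word n op w1) = mon_mat n d (eval_word n op w2)"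
  using eval_word_snd_eq_mod[OF assms] assms(3) by (intro mon_mat_cong_mod) simp_all

lemma exists_inverse_word:
  assumes "w \<in> lists {..<n}"
  obtains w' where "w' \<in> lists {..<n}" "mon_mat n d (eval_word n op (w @ w')) = 1\<^sub>m n"
proof -
  let ?v = "fst (eval_word n op w)"
  have "supported n (\<lambda>i. (d - 1) * ?v i)"
    using eval_word_supported[OF assms] by (simp add: supported_def)
  then obtain w' where w': "w' \<in> lists {..<n}" "fst (eval_word n op (w @ w')) = (\<lambda>i. ?v i + (d - 1) * ?v i)"
    using exists_word_append[OF assms] by blast
  have "?v i + (d - 1) * ?v i = d * ?v i" for i
    using class_pos by (cases d) simp_all
  then have "(?v i + (d - 1) * ?v i) mod d = 0" for i
    by simp
  then have "mon_mat n d (eval_word n op (w @ w')) = mon_mat n d (eval_word n op [])"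
    using assms w' by (intro mon_mat_eval_word_mod) (simp_all add: mon_one_def)
  then show ?thesis
    using that w'(1) mon_mat_one by simp
qed

lemma germ_gen_eq_mon_mat_eval_word: "germ_gen n op s = mon_mat n d (eval_word n op [s])"
  by (simp add: germ_gen_eq_mon_mat eval_word.simps)

lemma germ_subset_words: "germ n op \<subseteq> (\<lambda>w. mon_mat n d (eval_word n op w)) ` lists {..<n}"
proof
  fix A
  assume "A \<in> germ n op"
  then show "A \<in> (\<lambda>w. mon_mat n d (eval_word n op w)) ` lists {..<n}"
    unfolding germ_def
  proof (induction rule: gen_subgroup.induct)
    case one
    show ?case
      using mon_mat_one by (auto intro!: image_eqI[of _ _ "[]"])
  next
    case (gen A)
    then show ?case
      using germ_gen_eq_mon_mat_eval_word by auto
  next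
    case (mult A B)
    then show ?case
      using mon_mat_eval_word_append by (auto intro!: image_eqI)
  next
    case (inv A B)
    then obtain w where w: "w \<in> lists {..<n}" "A = mon_mat n d (eval_word n op w)"
      by blast
    obtain w' where w': "w' \<in> lists {..<n}" "A * mon_mat n d (eval_word n op w') = 1\<^sub>m n"
      using exists_inverse_word[OF w(1)] mon_mat_eval_word_append[OF w(1)] w(2) by metis
    have "B = B * (A * mon_mat n d (eval_word n op w'))"
      using inv.hyps(2) w'(2) by simp
    also have "\<dots> = (B * A) * mon_mat n d (eval_word n op w')"
      using inv.hyps(2) w(2) by (simp add: assoc_mult_mat[OF _ mon_mat_carrier mon_mat_carrier])
    finally show ?case
      using inv.hyps(3) w'(1) by auto
  qed
qed

lemma words_subset_germ: "(\<lambda>w. mon_mat n d (eval_word n op w)) ` lists {..<n} \<subseteq> germ n op"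
proof (rule image_subsetI)
  fix w
  assume "w \<in> lists {..<n}"
  then show "mon_mat n d (eval_word n op w) \<in> germ n op"
  proof (induction w)
    case Nil
    then show ?case
      unfolding germ_def using mon_mat_one gen_subgroup.one by simp
  next
    case (Cons s w)
    then have "mon_mat n d (eval_word n op (s # w)) = germ_gen n op s * mon_mat n d (eval_word n op w)"
      using mon_mat_eval_word_append[of "[s]"] germ_gen_eq_mon_mat_eval_word by simp
    then show ?case
      using Cons unfolding germ_def by (auto intro: gen_subgroup.mult gen_subgroup.gen)
  qed
qed

lemma germ_eq_words: "germ n op = (\<lambda>w. mon_mat n d (eval_word n op w)) ` lists {..<n}"
  using germ_subset_words words_subset_germ by (rule equalityI)

definition germ_multiples :: "nat \<Rightarrow> complex mat set" where
  "germ_multiples g = (\<lambda>w. mon_mat n d (eval_word n op w)) `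
     {w \<in> lists {..<n}. \<forall>i. g dvd fst (eval_word n op w) i}"

lemma germ_multiples_1: "germ_multiples 1 = germ n op"
  by (simp add: germ_multiples_def germ_eq_words)

lemma germ_multiples_class: "germ_multiples d = {1\<^sub>m n}"
proof -
  have "mon_mat n d (eval_word n op w) = mon_mat n d (eval_word n op [])"
    if "w \<in> lists {..<n}" "\<forall>i. d dvd fst (eval_word n op w) i" for w
    using that by (intro mon_mat_eval_word_mod) (simp_all add: mon_one_def)
  then show ?thesis
    unfolding germ_multiples_def using mon_mat_one
    by (auto simp: mon_one_def intro!: image_eqI[of _ _ "[]"])
qed

lemma mon_mat_eval_word_gcd_factor:
  assumes "a \<noteq> 0" "w \<in> lists {..<n}" "\<forall>i. gcd a b dvd fst (eval_word n op w) i"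
  obtains w1 w2 where "w1 \<in> lists {..<n}" "\<forall>i. a dvd fst (eval_word n op w1) i"
    and "w2 \<in> lists {..<n}" "\<forall>i. b dvd fst (eval_word n op w2) i"
    and "mon_mat n d (eval_word n op w) = mon_mat n d (eval_word n op w1) * mon_mat n d (eval_word n op w2)"
proof -
  have bezout: "\<forall>i. \<exists>xy. (a * fst xy + b * snd xy) mod d = fst (eval_word n op w) i mod d"
  proof
    fix i
    obtain x y where "(a * x + b * y) mod d = fst (eval_word n op w) i mod d"
      using bezout_mod_nat[OF assms(1) assms(3)[rule_format] class_pos] .
    then show "\<exists>xy. (a * fst xy + b * snd xy) mod d = fst (eval_word n op w) i mod d"
      by (intro exI[of _ "(x, y)"]) simp
  qed
  obtain xy where xy: "\<forall>i. (a * fst (xy i) + b * snd (xy i)) mod d = fst (eval_word n op w) i mod d"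
    using choice[OF bezout] by blast
  define x where "x i = (if i < n then a * fst (xy i) else 0)" for i
  define y where "y i = (if i < n then b * snd (xy i) else 0)" for i
  have "supported n x" "supported n y"
    by (simp_all add: supported_def x_def y_def)
  obtain w1 where w1: "w1 \<in> lists {..<n}" "fst (eval_word n op w1) = x"
    using exists_word[OF \<open>supported n x\<close>] by blast
  obtain w2 where w2: "w2 \<in> lists {..<n}" "fst (eval_word n op w2) = y \<circ> inv_into UNIV (snd (eval_word n op w1))"
      "fst (eval_word n op (w1 @ w2)) = (\<lambda>i. fst (eval_word n op w1) i + y i)"
    using exists_word_append[OF w1(1) \<open>supported n y\<close>] by blast
  have "mon_mat n d (eval_word n op w) = mon_mat n d (eval_word n op (w1 @ w2))"
    using assms(2) w1 w2(1,3) xy by (intro mon_mat_eval_word_mod) (simp_all add: x_def y_def)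
  also have "\<dots> = mon_mat n d (eval_word n op w1) * mon_mat n d (eval_word n op w2)"
    by (rule mon_mat_eval_word_append[OF w1(1), symmetric])
  finally show ?thesis
    using that w1 w2(1,2) by (simp add: x_def y_def)
qed

lemma set_mult_germ_multiples:
  assumes "a \<noteq> 0"
  shows "set_mult (germ_multiples a) (germ_multiples b) = germ_multiples (gcd a b)"
proof
  show "set_mult (germ_multiples a) (germ_multiples b) \<subseteq> germ_multiples (gcd a b)"
  proof
    fix C
    assume "C \<in> set_mult (germ_multiples a) (germ_multiples b)"
    then obtain w1 w2 where w: "w1 \<in> lists {..<n}" "\<forall>i. a dvd fst (eval_word n op w1) i"
      "w2 \<in> lists {..<n}" "\<forall>i. b dvd fst (eval_word n op w2) i"
      and C: "C = mon_mat n d (eval_word n op w1) * mon_mat n d (eval_word n op w2)"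
      unfolding set_mult_def germ_multiples_def by blast
    have "gcd a b dvd fst (eval_word n op (w1 @ w2)) i" for i
      using dvd_trans[OF gcd_dvd1 w(2)[rule_format]] dvd_trans[OF gcd_dvd2 w(4)[rule_format]]
      by (simp add: eval_word_append mon_mult_def)
    then show "C \<in> germ_multiples (gcd a b)"
      unfolding germ_multiples_def C mon_mat_eval_word_append[OF w(1)]
      using w(1,3) by (intro image_eqI[of _ _ "w1 @ w2"]) simp_all
  qed
  show "germ_multiples (gcd a b) \<subseteq> set_mult (germ_multiples a) (germ_multiples b)"
  proof
    fix C
    assume "C \<in> germ_multiples (gcd a b)"
    then obtain w where w: "w \<in> lists {..<n}" "\<forall>i. gcd a b dvd fst (eval_word n op w) i"
      and C: "C = mon_mat n d (eval_word n op w)"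
      unfolding germ_multiples_def by blast
    obtain w1 w2 where "w1 \<in> lists {..<n}" "\<forall>i. a dvd fst (eval_word n op w1) i"
      and "w2 \<in> lists {..<n}" "\<forall>i. b dvd fst (eval_word n op w2) i"
      and "C = mon_mat n d (eval_word n op w1) * mon_mat n d (eval_word n op w2)"
      using mon_mat_eval_word_gcd_factor[OF assms w] C by metis
    then show "C \<in> set_mult (germ_multiples a) (germ_multiples b)"
      unfolding set_mult_def germ_multiples_def by blast
  qed
qed

lemma set_prod_list_germ_multiples:
  "0 \<notin> set ms \<Longrightarrow> set_prod_list n (map germ_multiples ms) = germ_multiples (Gcd (insert d (set ms)))"
proof (induction ms)
  case Nil
  then show ?case
    by (simp add: set_prod_list_def germ_multiples_class)
next
  case (Cons m ms)
  then have "set_prod_list n (map germ_multiples (m # ms)) = germ_multiples (gcd m (Gcd (insert d (set ms))))"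
    by (simp add: set_prod_list_def set_mult_germ_multiples)
  then show ?case
    by (simp add: gcd.left_commute)
qed

lemma germ_multiples_eq_expand:
  "germ_multiples m = (\<lambda>w. mon_mat n d (eval_word n op (expand_word op m w))) ` lists {..<n}"
proof -
  interpret P: finite_cycle_set n "cs_psik op m"
    by (rule finite_cycle_set_psik)
  let ?M = "\<lambda>w. mon_mat n d (eval_word n op w)"
  show ?thesis
  proof
    show "germ_multiples m \<subseteq> (\<lambda>u. ?M (expand_word op m u)) ` lists {..<n}"
    proof
      fix A
      assume "A \<in> germ_multiples m"
      then obtain w where w: "w \<in> lists {..<n}" "\<forall>i. m dvd fst (eval_word n op w) i" "A = ?M w"
        unfolding germ_multiples_def by blast
      have "supported n (\<lambda>i. fst (eval_word n op w) i div m)"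
        using eval_word_supported[OF w(1)] by (simp add: supported_def)
      then obtain u where u: "u \<in> lists {..<n}"
        "fst (eval_word n (cs_psik op m) u) = (\<lambda>i. fst (eval_word n op w) i div m)"
        using P.exists_word by blast
      then have "fst (eval_word n op (expand_word op m u)) = fst (eval_word n op w)"
        using w(2) by (simp add: eval_expand_word fun_eq_iff)
      then have "eval_word n op (expand_word op m u) = eval_word n op w"
        using u(1) w(1) expand_word_lists by (blast intro: eval_word_eqI)
      then show "A \<in> (\<lambda>u. ?M (expand_word op m u)) ` lists {..<n}"
        using u(1) w(3) by (intro image_eqI[of _ _ u]) simp_all
    qed
    show "(\<lambda>u. ?M (expand_word op m u)) ` lists {..<n} \<subseteq> germ_multiples m"
    proof (rule image_subsetI)
      fix u
      assume "u \<in> lists {..<n}"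
      then show "?M (expand_word op m u) \<in> germ_multiples m"
        unfolding germ_multiples_def using expand_word_lists eval_expand_word
        by (intro image_eqI[of _ _ "expand_word op m u"]) simp_all
    qed
  qed
qed

lemma iota_germ_psik:
  assumes "m > 0" "m dvd d"
  shows "iota (cs_class n (cs_psik op m)) d ` germ n (cs_psik op m) = germ_multiples m"
proof -
  interpret P: finite_cycle_set n "cs_psik op m"
    by (rule finite_cycle_set_psik)
  define q where "q = d div m"
  have q: "cs_class n (cs_psik op m) = q" "q > 0" "q dvd d" "d = q * m"
    using class_psik[OF assms] assms class_pos unfolding q_def
    by (auto simp: div_greater_zero_iff dvd_imp_le)
  have "iota q d ` germ n (cs_psik op m) = (\<lambda>w. mon_mat n q (eval_word n (cs_psik op m) w)) ` lists {..<n}"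
    unfolding P.germ_eq_words q(1) image_image using iota_mon_mat[OF q(2,3) class_pos] by simp
  also have "\<dots> = (\<lambda>w. mon_mat n d (eval_word n op (expand_word op m w))) ` lists {..<n}"
    using mon_mat_scale[OF assms(1)] q(4) by (intro image_cong) (simp_all add: eval_expand_word)
  finally show ?thesis
    using q(1) germ_multiples_eq_expand by simp
qed


definition prime_part_op :: "nat \<Rightarrow> nat \<Rightarrow> nat \<Rightarrow> nat" where
  "prime_part_op p = cs_psik op (d div p ^ multiplicity p d)"

lemma cycle_set_prime_part_op: "cycle_set n (prime_part_op p)"
  unfolding prime_part_op_def by (rule cycle_set_psik)

lemma prime_power_cofactor:
  "d div p ^ multiplicity p d > 0" "d div p ^ multiplicity p d dvd d"
  "d div (d div p ^ multiplicity p d) = p ^ multiplicity p d"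
  using complementary_divisor_nat[OF multiplicity_dvd] class_pos by simp_all

lemma class_prime_part_op: "cs_class n (prime_part_op p) = p ^ multiplicity p d"
  unfolding prime_part_op_def using class_psik prime_power_cofactor by simp

lemma germ_eq_prod_prime_parts:
  assumes "set ps = prime_factors d"
  shows "germ n op = set_prod_list n (map (\<lambda>p. iota (cs_class n (prime_part_op p)) d ` germ n (prime_part_op p)) ps)"
proof -
  define cofactor where "cofactor p = d div p ^ multiplicity p d" for p
  have "0 \<notin> set (map cofactor ps)"
    using prime_power_cofactor(1) unfolding cofactor_def[symmetric]
    by (metis ex_map_conv in_set_conv_nth less_irrefl)
  then have product: "set_prod_list n (map germ_multiples (map cofactor ps))
      = germ_multiples (Gcd (insert d (set (map cofactor ps))))"
    by (rule set_prod_list_germ_multiples)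
  have gcd: "Gcd (insert d (set (map cofactor ps))) = 1"
    unfolding set_map assms cofactor_def[abs_def] using class_pos by (intro Gcd_prime_power_cofactors) simp
  have factors: "map (\<lambda>p. iota (cs_class n (prime_part_op p)) d ` germ n (prime_part_op p)) ps
      = map germ_multiples (map cofactor ps)"
    unfolding map_map prime_part_op_def cofactor_def
    by (intro map_cong refl) (simp add: iota_germ_psik[OF prime_power_cofactor(1,2)])
  show ?thesis
    unfolding factors product gcd germ_multiples_1 ..
qed

end

theorem mainTheorem1:
  fixes n :: nat and op :: "nat \<Rightarrow> nat \<Rightarrow> nat" and ps :: "nat list"
  assumes "cycle_set n op"
    and "cs_class n op > 1"
    and "distinct ps"
    and "set ps = prime_factors (cs_class n op)"
  shows "\<exists>ops :: nat \<Rightarrow> nat \<Rightarrow> nat \<Rightarrow> nat.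
           (\<forall>i < length ps. cycle_set n (ops i) \<and> (\<exists>k. cs_class n (ops i) = (ps ! i) ^ k)) \<and>
           germ n op = set_prod_list n
              (map (\<lambda>i. iota (cs_class n (ops i)) (cs_class n op) ` germ n (ops i)) [0..<length ps])"
proof -
  interpret finite_cycle_set n op
    by (rule finite_cycle_set.intro[OF assms(1)])
  define ops where "ops i = prime_part_op (ps ! i)" for i
  have "map (\<lambda>i. iota (cs_class n (ops i)) d ` germ n (ops i)) [0..<length ps]
      = map (\<lambda>p. iota (cs_class n (prime_part_op p)) d ` germ n (prime_part_op p)) ps"
    unfolding ops_def by (intro nth_equalityI) simp_all
  then have "germ n op = set_prod_list n (map (\<lambda>i. iota (cs_class n (ops i)) d ` germ n (ops i)) [0..<length ps])"
    using germ_eq_prod_prime_parts[OF assms(4)] by simp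
  moreover have "\<forall>i < length ps. cycle_set n (ops i) \<and> (\<exists>k. cs_class n (ops i) = ps ! i ^ k)"
    unfolding ops_def using cycle_set_prime_part_op class_prime_part_op by blast
  ultimately show ?thesis
    by blast
qed

end
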